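(* Let $p\ge2$ and let $(V_i)_{i\ge1}$ and $F_n^{(r)}$ be as in the context. For every $m\in\{0,1,\ldots,p-1\}$ and $n\in\mathbb N$, \[ \mathcal H^{p,m}_n := \det_{0 \leq i,j \leq n} F_{q_{i+m} + j}^{(r_{i+m})} = \prod_{i=0}^n \prod_{j=1}^{ip+m} V_j , \] where for $k\in\mathbb N$, $q_k=\lfloor k/(p-1)\rfloor$ and $r_k=k-(p-1)q_k$ are the quotient and remainder of the Euclidean division of $k$ by $p-1$.
   Context: Fix an integer $p\ge 2$. A $p$-constellation is a planar map (proper embedding of a connected graph in the sphere, up to orientation-preserving homeomorphism) whose faces are colored black or white so that adjacent faces have opposite colors, every black face has degree $p$ and every white face has degree a multiple of $p$. Edges are oriented with the white face on their right. Rooted means one edge (root edge) is distinguished; pointed means a vertex (pointed vertex) is distinguished. In a pointed constellation a vertex has type $j$ if $j$ is the minimal length of an oriented path from it to the pointed vertex; an edge has type $j\to j'$ if its origin and endpoint have types $j,j'$. Let $(x_k)_{k\ge1}$ be formal variables, a white face of degree $kp$ having weight $x_k$, and a constellation weighted by the product of its white face weights. For $i\ge1$, $V_i$ is $1$ plus the generating function of pointed rooted $p$-constellations whose root edge is of type $j\to j-1$ for some $j\le i$. A $p$-path is a lattice path in $\mathbb Z\times\mathbb N$ with rises $(1,p-1)$ and falls $(1,-1)$; its weight is the product over its falls of $V_i$, $i$ being the starting height of the fall. For $n,r\ge0$, $F_n^{(r)}$ is the sum of the weights of all $p$-paths from $(-r,r)$ to $(np,0)$. *)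

theory Defs
  imports "Jordan_Normal_Form.Determinant"
begin

text \<open>A p-path from (-r,r) is encoded by its list of steps: True = rise (1,p-1),
  False = fall (1,-1). Height after the first k steps:\<close>
definition ppath_height :: "nat \<Rightarrow> nat \<Rightarrow> bool list \<Rightarrow> nat \<Rightarrow> int" where
  "ppath_height p r s k = int r + sum_list (map (\<lambda>b. if b then int p - 1 else -1) (take k s))"

text \<open>p-paths from (-r,r) to (np,0) in Z x N: n*p+r steps, heights never negative,
  final height 0.\<close>
definition is_ppath :: "nat \<Rightarrow> nat \<Rightarrow> nat \<Rightarrow> bool list \<Rightarrow> bool" where
  "is_ppath p n r s \<longleftrightarrow> length s = n * p + r \<and>
     (\<forall>k\<le>length s. ppath_height p r s k \<ge> 0) \<and> ppath_height p r s (length s) = 0"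

definition ppath_weight :: "nat \<Rightarrow> (nat \<Rightarrow> 'a::comm_ring_1) \<Rightarrow> nat \<Rightarrow> bool list \<Rightarrow> 'a" where
  "ppath_weight p V r s = (\<Prod>k<length s. if s ! k then 1 else V (nat (ppath_height p r s k)))"

definition Fpath :: "nat \<Rightarrow> (nat \<Rightarrow> 'a::comm_ring_1) \<Rightarrow> nat \<Rightarrow> nat \<Rightarrow> 'a" where
  "Fpath p V n r = (\<Sum>s\<in>{s. is_ppath p n r s}. ppath_weight p V r s)"

end

theory Submission
  imports Defs
begin

text \<open>For row i write q = q_{i+m} and r = r_{i+m}, and cut every path counted by F_{q+j}^{(r)}
  after its first i + q steps. Starting from height r these steps climb at most to i p + m, and
  since the remaining j p + m steps end at height 0, the cut happens at a height t p + m with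
  t \<le> j. So the matrix is A B^T, where A_{it} weighs the walks from r to t p + m in i + q steps
  and B_{jt} those from t p + m to 0 in j p + m steps. Both are lower triangular: the diagonal of
  A is the single all-rise walk, of weight 1, and that of B the all-fall walk from i p + m, of
  weight V_1 \<cdots> V_{ip+m}.\<close>

text \<open>pwalks p V h L h' is the total weight of the L-step walks from height h to height h' that
  never go below 0, with rises +(p - 1) and falls -1 weighted as in ppath_weight.\<close>
fun pwalks :: "nat \<Rightarrow> (nat \<Rightarrow> 'a::comm_ring_1) \<Rightarrow> nat \<Rightarrow> nat \<Rightarrow> nat \<Rightarrow> 'a" where
  "pwalks p V h 0 h' = (if h = h' then 1 else 0)"
| "pwalks p V h (Suc L) h' =
     pwalks p V (h + (p - 1)) L h' + (if h \<ge> 1 then V h * pwalks p V (h - 1) L h' else 0)"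

definition is_pwalk :: "nat \<Rightarrow> nat \<Rightarrow> nat \<Rightarrow> bool list \<Rightarrow> bool" where
  "is_pwalk p h h' s \<longleftrightarrow>
     (\<forall>k\<le>length s. ppath_height p h s k \<ge> 0) \<and> ppath_height p h s (length s) = int h'"

lemma is_ppath_iff_is_pwalk: "is_ppath p n r s \<longleftrightarrow> length s = n * p + r \<and> is_pwalk p r 0 s"
  by (auto simp: is_ppath_def is_pwalk_def)

lemma ppath_height_0 [simp]: "ppath_height p h s 0 = int h"
  by (simp add: ppath_height_def)

lemma ppath_height_Cons_rise:
  "p \<ge> 1 \<Longrightarrow> ppath_height p h (True # s) (Suc k) = ppath_height p (h + (p - 1)) s k"
  by (simp add: ppath_height_def of_nat_diff)

lemma ppath_height_Cons_fall:
  "ppath_height p (Suc h) (False # s) (Suc k) = ppath_height p h s k"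
  by (simp add: ppath_height_def)

lemma all_le_Suc_conv: "(\<forall>k\<le>Suc n. P k) \<longleftrightarrow> P 0 \<and> (\<forall>k\<le>n. P (Suc k))"
  by (simp flip: less_Suc_eq_le add: All_less_Suc2)

lemma is_pwalk_Nil [simp]: "is_pwalk p h h' [] \<longleftrightarrow> h = h'"
  by (simp add: is_pwalk_def)

lemma is_pwalk_Cons_rise:
  "p \<ge> 1 \<Longrightarrow> is_pwalk p h h' (True # s) \<longleftrightarrow> is_pwalk p (h + (p - 1)) h' s"
  by (simp add: is_pwalk_def all_le_Suc_conv ppath_height_Cons_rise)

lemma is_pwalk_Cons_fall: "is_pwalk p (Suc h) h' (False # s) \<longleftrightarrow> is_pwalk p h h' s"
  by (simp add: is_pwalk_def all_le_Suc_conv ppath_height_Cons_fall)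

lemma not_is_pwalk_fall_from_0: "\<not> is_pwalk p 0 h' (False # s)"
  unfolding is_pwalk_def by (auto dest: spec[of _ 1] simp: ppath_height_def)

lemma ppath_weight_Cons:
  "ppath_weight p V h (b # s) =
     (if b then 1 else V h) * (\<Prod>k<length s. if s ! k then 1 else V (nat (ppath_height p h (b # s) (Suc k))))"
  unfolding ppath_weight_def length_Cons prod.lessThan_Suc_shift nth_Cons_0 nth_Cons_Suc
  by simp

lemma ppath_weight_Cons_rise:
  assumes "p \<ge> 1"
  shows "ppath_weight p V h (True # s) = ppath_weight p V (h + (p - 1)) s"
  unfolding ppath_weight_Cons ppath_height_Cons_rise[OF assms] if_True mult_1_left
  by (simp only: ppath_weight_def)

lemma ppath_weight_Cons_fall:
  "ppath_weight p V (Suc h) (False # s) = V (Suc h) * ppath_weight p V h s"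
  unfolding ppath_weight_Cons ppath_height_Cons_fall if_False
  by (simp only: ppath_weight_def)

lemma finite_bool_lists_length: "finite {s :: bool list. length s = L}"
  using finite_lists_length_eq[of "UNIV :: bool set" L] by simp

lemma sum_bool_lists_length_Suc:
  "(\<Sum>s | length s = Suc L. f s) = (\<Sum>s | length s = L. f (True # s) + f (False # s))"
proof -
  let ?A = "{s :: bool list. length s = L}"
  have "{s :: bool list. length s = Suc L} = (#) True ` ?A \<union> (#) False ` ?A"
    by (auto simp: length_Suc_conv image_iff)
  then have "(\<Sum>s | length s = Suc L. f s) = (\<Sum>s\<in>(#) True ` ?A. f s) + (\<Sum>s\<in>(#) False ` ?A. f s)"
    by (simp only:) (rule sum.union_disjoint, auto simp: finite_bool_lists_length)
  also have "\<dots> = (\<Sum>s\<in>?A. f (True # s)) + (\<Sum>s\<in>?A. f (False # s))"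
    by (simp add: sum.reindex)
  finally show ?thesis
    by (simp add: sum.distrib)
qed

lemma sum_pwalk_weights:
  assumes "p \<ge> 1"
  shows "(\<Sum>s | length s = L. if is_pwalk p h h' s then ppath_weight p V h s else 0) = pwalks p V h L h'"
proof (induction L arbitrary: h)
  case 0
  then show ?case
    by (simp add: ppath_weight_def)
next
  case (Suc L)
  have rises: "(\<Sum>s | length s = L. if is_pwalk p h h' (True # s) then ppath_weight p V h (True # s) else 0)
      = pwalks p V (h + (p - 1)) L h'"
    using Suc.IH[of "h + (p - 1)"]
    by (simp only: is_pwalk_Cons_rise[OF assms] ppath_weight_Cons_rise[OF assms])
  have falls: "(\<Sum>s | length s = L. if is_pwalk p h h' (False # s) then ppath_weight p V h (False # s) else 0)
      = (if h \<ge> 1 then V h * pwalks p V (h - 1) L h' else 0)"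
  proof (cases h)
    case 0
    then show ?thesis
      by (simp add: not_is_pwalk_fall_from_0)
  next
    case (Suc h\<^sub>0)
    have "(\<Sum>s | length s = L. if is_pwalk p h h' (False # s) then ppath_weight p V h (False # s) else 0)
        = V h * (\<Sum>s | length s = L. if is_pwalk p h\<^sub>0 h' s then ppath_weight p V h\<^sub>0 s else 0)"
      unfolding sum_distrib_left Suc is_pwalk_Cons_fall ppath_weight_Cons_fall by (rule sum.cong) auto
    then show ?thesis
      using Suc by (simp add: Suc.IH)
  qed
  show ?case
    unfolding sum_bool_lists_length_Suc sum.distrib rises falls by simp
qed

lemma Fpath_eq_pwalks:
  assumes "p \<ge> 1"
  shows "Fpath p V n r = pwalks p V r (n * p + r) 0"
proof -
  have "{s. is_ppath p n r s} = {s \<in> {s. length s = n * p + r}. is_pwalk p r 0 s}"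
    by (auto simp: is_ppath_iff_is_pwalk)
  then have "Fpath p V n r = (\<Sum>s | length s = n * p + r. if is_pwalk p r 0 s then ppath_weight p V r s else 0)"
    unfolding Fpath_def by (simp only: sum.inter_filter[OF finite_bool_lists_length])
  also have "\<dots> = pwalks p V r (n * p + r) 0"
    by (rule sum_pwalk_weights[OF assms])
  finally show ?thesis .
qed

lemma pwalks_eq_0_if_above: "h' > h + L * (p - 1) \<Longrightarrow> pwalks p V h L h' = 0"
  by (induction L arbitrary: h) (simp_all add: add.assoc)

lemma pwalks_all_rises: "pwalks p V h L (h + L * (p - 1)) = 1"
proof (induction L arbitrary: h)
  case 0
  then show ?case by simp
next
  case (Suc L)
  have "pwalks p V (h - 1) L (h + Suc L * (p - 1)) = 0" if "h \<ge> 1"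
    using that by (intro pwalks_eq_0_if_above) auto
  moreover have "pwalks p V (h + (p - 1)) L (h + Suc L * (p - 1)) = 1"
    using Suc.IH[of "h + (p - 1)"] by (simp add: add.assoc)
  ultimately show ?case by simp
qed

lemma pwalks_eq_0_if_below: "h' + L < h \<Longrightarrow> pwalks p V h L h' = 0"
  by (induction L arbitrary: h) auto

lemma pwalks_all_falls: "pwalks p V L L 0 = (\<Prod>l=1..L. V l)"
proof (induction L)
  case 0
  then show ?case by simp
next
  case (Suc L)
  have "pwalks p V (Suc L + (p - 1)) L 0 = 0"
    by (rule pwalks_eq_0_if_below) simp
  then show ?case
    using Suc.IH by (simp add: prod.nat_ivl_Suc' mult.commute)
qed

lemma pwalks_nonzero_imp_congruent:
  assumes "p \<ge> 1" and "pwalks p V h L h' \<noteq> 0"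
  shows "\<exists>a. h' + L = h + a * p"
  using assms(2)
proof (induction L arbitrary: h)
  case 0
  then show ?case by (auto split: if_splits)
next
  case (Suc L)
  show ?case
  proof (cases "pwalks p V (h + (p - 1)) L h' = 0")
    case False
    then obtain a where "h' + L = h + (p - 1) + a * p"
      using Suc.IH by blast
    then have "h' + Suc L = h + Suc a * p"
      using assms(1) by simp
    then show ?thesis ..
  next
    case True
    then have "h \<ge> 1" and "pwalks p V (h - 1) L h' \<noteq> 0"
      using Suc.prems by (auto split: if_splits)
    then obtain a where "h' + L = h - 1 + a * p"
      using Suc.IH by blast
    then have "h' + Suc L = h + a * p"
      using \<open>h \<ge> 1\<close> by simp
    then show ?thesis ..
  qed
qed

text \<open>The bound \<open>H\<close> only has to dominate every height reachable in \<open>L\<^sub>1\<close> steps.\<close>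
lemma pwalks_add:
  assumes "H \<ge> h + L\<^sub>1 * (p - 1)"
  shows "pwalks p V h (L\<^sub>1 + L\<^sub>2) h' = (\<Sum>x\<le>H. pwalks p V h L\<^sub>1 x * pwalks p V x L\<^sub>2 h')"
  using assms
proof (induction L\<^sub>1 arbitrary: h)
  case 0
  then show ?case
    by (simp add: if_distrib[of "\<lambda>c. c * _"] cong: if_cong)
next
  case (Suc L\<^sub>1)
  have rises: "pwalks p V (h + (p - 1)) (L\<^sub>1 + L\<^sub>2) h'
      = (\<Sum>x\<le>H. pwalks p V (h + (p - 1)) L\<^sub>1 x * pwalks p V x L\<^sub>2 h')"
    using Suc.prems by (intro Suc.IH) (simp add: add.assoc)
  have falls: "pwalks p V (h - 1) (L\<^sub>1 + L\<^sub>2) h'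
      = (\<Sum>x\<le>H. pwalks p V (h - 1) L\<^sub>1 x * pwalks p V x L\<^sub>2 h')"
    using Suc.prems by (intro Suc.IH) simp
  show ?case
    unfolding add_Suc pwalks.simps(2) rises falls
    by (cases "h \<ge> 1") (simp_all add: sum_distrib_left sum.distrib distrib_right mult.assoc)
qed

lemma pwalks_to_0_nonzero_imp_level:
  assumes "p \<ge> 1" and "m < p" and "pwalks p V x (j * p + m) 0 \<noteq> 0"
  shows "\<exists>t\<le>j. x = t * p + m"
proof -
  obtain a where a: "j * p + m = x + a * p"
    using pwalks_nonzero_imp_congruent[OF assms(1,3)] by auto
  have "a \<le> j"
  proof (rule ccontr)
    assume "\<not> a \<le> j"
    then have "j * p + p \<le> a * p"
      using mult_le_mono1[of "Suc j" a p] by simp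
    then show False
      using a \<open>m < p\<close> by linarith
  qed
  then have "x = (j - a) * p + m"
    using a by (simp add: diff_mult_distrib)
  then show ?thesis
    by (intro exI[of _ "j - a"]) simp
qed

text \<open>A walk ending at height \<open>0\<close> after a final stretch of \<open>j p + m\<close> steps is at one of the
  levels \<open>t p + m\<close>, \<open>t \<le> j\<close>, when that stretch begins.\<close>
lemma pwalks_split_at_levels:
  assumes "p \<ge> 1" and "m < p" and "j \<le> n"
  shows "pwalks p V h (L + (j * p + m)) 0
    = (\<Sum>t<Suc n. pwalks p V h L (t * p + m) * pwalks p V (t * p + m) (j * p + m) 0)"
proof -
  define f where "f x = pwalks p V h L x * pwalks p V x (j * p + m) 0" for x
  define level where "level t = t * p + m" for t
  define H where "H = h + L * (p - 1) + n * p + m"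
  have "pwalks p V h (L + (j * p + m)) 0 = (\<Sum>x\<le>H. f x)"
    unfolding f_def H_def by (rule pwalks_add) simp
  also have "\<dots> = (\<Sum>x\<in>level ` {..<Suc n}. f x)"
  proof (rule sum.mono_neutral_right)
    show "level ` {..<Suc n} \<subseteq> {..H}"
    proof (rule image_subsetI)
      fix t
      assume "t \<in> {..<Suc n}"
      then have "t * p \<le> n * p" by simp
      then show "level t \<in> {..H}"
        unfolding level_def H_def atMost_iff by linarith
    qed
    show "\<forall>x\<in>{..H} - level ` {..<Suc n}. f x = 0"
    proof (rule ballI, rule ccontr)
      fix x
      assume x: "x \<in> {..H} - level ` {..<Suc n}" and "f x \<noteq> 0"
      then have "pwalks p V x (j * p + m) 0 \<noteq> 0"
        by (auto simp: f_def)
      then obtain t where "t \<le> j" "x = level t"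
        unfolding level_def using pwalks_to_0_nonzero_imp_level[OF assms(1,2)] by blast
      moreover have "t \<in> {..<Suc n}"
        using \<open>t \<le> j\<close> \<open>j \<le> n\<close> by simp
      ultimately have "x \<in> level ` {..<Suc n}"
        by blast
      then show False
        using x by blast
    qed
  qed simp
  also have "\<dots> = (\<Sum>t<Suc n. f (level t))"
    using \<open>p \<ge> 1\<close> by (subst sum.reindex) (auto simp: inj_on_def level_def)
  finally show ?thesis
    by (simp add: f_def level_def)
qed

lemma Fpath_split_at_levels:
  assumes "p \<ge> 1" and "m < p" and "j \<le> n"
  shows "Fpath p V ((i + m) div (p - 1) + j) ((i + m) mod (p - 1))
    = (\<Sum>t<Suc n. pwalks p V ((i + m) mod (p - 1)) (i + (i + m) div (p - 1)) (t * p + m)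
                  * pwalks p V (t * p + m) (j * p + m) 0)"
proof -
  let ?q = "(i + m) div (p - 1)" and ?r = "(i + m) mod (p - 1)"
  have "?q * (p - 1) + ?r = i + m"
    by (rule div_mult_mod_eq)
  moreover have "?q * p = ?q * (p - 1) + ?q"
    using \<open>p \<ge> 1\<close> by (cases p) auto
  ultimately have steps: "(?q + j) * p + ?r = (i + ?q) + (j * p + m)"
    by (simp add: distrib_right)
  have "Fpath p V (?q + j) ?r = pwalks p V ?r ((?q + j) * p + ?r) 0"
    by (rule Fpath_eq_pwalks[OF \<open>p \<ge> 1\<close>])
  also have "\<dots> = pwalks p V ?r ((i + ?q) + (j * p + m)) 0"
    unfolding steps ..
  also have "\<dots> = (\<Sum>t<Suc n. pwalks p V ?r (i + ?q) (t * p + m) * pwalks p V (t * p + m) (j * p + m) 0)"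
    by (rule pwalks_split_at_levels[OF assms])
  finally show ?thesis .
qed

lemma det_mat_lower_triangular:
  assumes "\<And>i j. i < j \<Longrightarrow> j < n \<Longrightarrow> f (i, j) = 0"
  shows "det (mat n n f) = (\<Prod>i<n. f (i, i))"
  by (subst det_lower_triangular[of n]) (auto simp: assms prod_list_diag_prod atLeast0LessThan)

lemma remainder_add_rises_eq:
  fixes i m p :: nat
  assumes "p \<ge> 1"
  shows "(i + m) mod (p - 1) + (i + (i + m) div (p - 1)) * (p - 1) = i * p + m"
proof -
  have "(i + m) div (p - 1) * (p - 1) + (i + m) mod (p - 1) = i + m"
    by (rule div_mult_mod_eq)
  moreover have "i * p = i * (p - 1) + i"
    using assms by (cases p) auto
  ultimately show ?thesis
    by (simp add: distrib_right)
qed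

lemma det_pwalks_rising:
  assumes "p \<ge> 1"
  shows "det (mat (Suc n) (Suc n)
      (\<lambda>(i, t). pwalks p V ((i + m) mod (p - 1)) (i + (i + m) div (p - 1)) (t * p + m))) = 1"
proof -
  have above: "pwalks p V ((i + m) mod (p - 1)) (i + (i + m) div (p - 1)) (t * p + m) = 0"
    if "i < t" for i t
  proof (rule pwalks_eq_0_if_above)
    have "i * p + p \<le> t * p"
      using that mult_le_mono1[of "Suc i" t p] by simp
    then show "t * p + m > (i + m) mod (p - 1) + (i + (i + m) div (p - 1)) * (p - 1)"
      unfolding remainder_add_rises_eq[OF assms] using assms by linarith
  qed
  have diagonal: "pwalks p V ((i + m) mod (p - 1)) (i + (i + m) div (p - 1)) (i * p + m) = 1" for i
    using pwalks_all_rises[of p V "(i + m) mod (p - 1)" "i + (i + m) div (p - 1)"]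
    unfolding remainder_add_rises_eq[OF assms] .
  show ?thesis
    by (subst det_mat_lower_triangular) (simp_all only: case_prod_conv above diagonal prod.neutral_const)
qed

lemma det_pwalks_falling:
  assumes "p \<ge> 1"
  shows "det (mat (Suc n) (Suc n) (\<lambda>(j, t). pwalks p V (t * p + m) (j * p + m) 0))
    = (\<Prod>i\<le>n. \<Prod>j=1..i * p + m. V j)"
proof -
  have "pwalks p V (t * p + m) (j * p + m) 0 = 0" if "j < t" for j t
  proof (rule pwalks_eq_0_if_below)
    have "j * p + p \<le> t * p"
      using that mult_le_mono1[of "Suc j" t p] by simp
    then show "0 + (j * p + m) < t * p + m"
      using assms by linarith
  qed
  then show ?thesis
    by (subst det_mat_lower_triangular) (auto simp: pwalks_all_falls lessThan_Suc_atMost)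
qed

lemma Fpath_mat_factorization:
  assumes p: "p \<ge> 1" and m: "m < p"
  shows "mat (Suc n) (Suc n) (\<lambda>(i, j). Fpath p V ((i + m) div (p - 1) + j) ((i + m) mod (p - 1)))
    = mat (Suc n) (Suc n)
        (\<lambda>(i, t). pwalks p V ((i + m) mod (p - 1)) (i + (i + m) div (p - 1)) (t * p + m))
      * transpose_mat (mat (Suc n) (Suc n) (\<lambda>(j, t). pwalks p V (t * p + m) (j * p + m) 0))"
    (is "_ = ?A * transpose_mat ?B")
proof (rule eq_matI)
  fix i j
  assume "i < dim_row (?A * transpose_mat ?B)" and "j < dim_col (?A * transpose_mat ?B)"
  then have i: "i < Suc n" and j: "j \<le> n"
    by auto
  have "(?A * transpose_mat ?B) $$ (i, j) = (\<Sum>t<Suc n. ?A $$ (i, t) * ?B $$ (j, t))"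
    using i j by (simp add: scalar_prod_def atLeast0LessThan)
  also have "\<dots> = Fpath p V ((i + m) div (p - 1) + j) ((i + m) mod (p - 1))"
    unfolding Fpath_split_at_levels[OF p m j] using i j by (intro sum.cong) auto
  finally show "mat (Suc n) (Suc n) (\<lambda>(i, j). Fpath p V ((i + m) div (p - 1) + j) ((i + m) mod (p - 1))) $$ (i, j)
      = (?A * transpose_mat ?B) $$ (i, j)"
    using i j by simp
qed auto

theorem theorem3:
  fixes p m n :: nat and V :: "nat \<Rightarrow> 'a::comm_ring_1"
  assumes "p \<ge> 2" and "m \<le> p - 1"
  shows "det (mat (Suc n) (Suc n)
            (\<lambda>(i, j). Fpath p V ((i + m) div (p - 1) + j) ((i + m) mod (p - 1))))
         = (\<Prod>i\<le>n. \<Prod>j=1..i * p + m. V j)"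
proof -
  have p: "p \<ge> 1" and m: "m < p"
    using assms by auto
  let ?A = "mat (Suc n) (Suc n)
    (\<lambda>(i, t). pwalks p V ((i + m) mod (p - 1)) (i + (i + m) div (p - 1)) (t * p + m))"
  let ?B = "mat (Suc n) (Suc n) (\<lambda>(j, t). pwalks p V (t * p + m) (j * p + m) 0)"
  have "det (?A * transpose_mat ?B) = det ?A * det ?B"
    using det_mult[of ?A "Suc n" "transpose_mat ?B"] det_transpose[of ?B "Suc n"] by simp
  then show ?thesis
    unfolding Fpath_mat_factorization[OF p m] det_pwalks_rising[OF p] det_pwalks_falling[OF p]
    by simp
qed

end
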